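(* Let $n\ge1$, let $p$ be a prime, and let $L(\mathbf{X})=\sum_{i,j=1}^n a_{ij}x_{ij}\in\mathbb{F}_p[\mathbf{X}]$ be a nontrivial (not identically zero) linear form in the $n^2$ variables $\mathbf{X}=(x_{ij})_{i,j=1}^n$. Then \[ S_p(L)=\sum_{\substack{\mathbf{X}\in\mathbb{F}_p^{n\times n}\\ \det\mathbf{X}=0}}\exp\left(2\pi i\,L(\mathbf{X})/p\right)\ll p^{n^2-(n+1)/2}, \] where the implied constant depends only on $n$.
   Context: Here $L(\mathbf{X})\in\mathbb{F}_p$ is identified with an integer in $\{0,\dots,p-1\}$ in the exponential. *)

theory Defs
  imports "HOL-Analysis.Analysis" "HOL-Library.FuncSet" "Jordan_Normal_Form.Determinant"
begin

text \<open>Elements of F_p are represented by integers in {0..<p}; an n x n matrix over F_p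
  is a function X with X i j in {0..<p} for i,j < n (extensional: arbitrary outside).\<close>

definition Fp_matrices :: "nat \<Rightarrow> nat \<Rightarrow> (nat \<Rightarrow> nat \<Rightarrow> int) set" where
  "Fp_matrices n p = {0..<n} \<rightarrow>\<^sub>E ({0..<n} \<rightarrow>\<^sub>E {0..<int p})"

definition det_zero_mod :: "nat \<Rightarrow> nat \<Rightarrow> (nat \<Rightarrow> nat \<Rightarrow> int) \<Rightarrow> bool" where
  "det_zero_mod n p X \<longleftrightarrow> int p dvd det (mat n n (\<lambda>(i,j). X i j))"

definition lin_form :: "nat \<Rightarrow> nat \<Rightarrow> (nat \<Rightarrow> nat \<Rightarrow> int) \<Rightarrow> (nat \<Rightarrow> nat \<Rightarrow> int) \<Rightarrow> int" where
  "lin_form n p a X = (\<Sum>i<n. \<Sum>j<n. a i j * X i j) mod int p"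

definition S_p :: "nat \<Rightarrow> nat \<Rightarrow> (nat \<Rightarrow> nat \<Rightarrow> int) \<Rightarrow> complex" where
  "S_p n p a = (\<Sum>X\<in>{X \<in> Fp_matrices n p. det_zero_mod n p X}.
      exp (2 * of_real pi * \<i> * of_int (lin_form n p a X) / of_nat p))"

end

theory Submission
  imports Defs
begin

(* Expand the determinant along a row k in which L has a coefficient a_kl not divisible by p.
   For fixed remaining rows Y, the condition det X = 0 says that row k lies in the hyperplane
   orthogonal to the cofactor vector c(Y), and the character sum of L over that hyperplane has
   modulus at most p^(n-1). As c(Y) is orthogonal to every row Y_i, translation by a row Y_i with
   a_k . Y_i not divisible by p maps the hyperplane to itself and multiplies the sum by a
   nontrivial p-th root of unity. So only the p^((n-1)^2) families Y whose rows all lie in the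
   hyperplane orthogonal to a_k contribute, and |S_p(L)| <= p^(n(n-1)) <= p^(n^2-(n+1)/2). *)

definition addchar :: "nat \<Rightarrow> int \<Rightarrow> complex" where
  "addchar p m = exp (2 * of_real pi * \<i> * of_int m / of_nat p)"

lemma addchar_add: "addchar p (a + b) = addchar p a * addchar p b"
  unfolding addchar_def by (simp add: exp_add[symmetric] add_divide_distrib algebra_simps)

lemma norm_addchar [simp]: "norm (addchar p m) = 1"
  unfolding addchar_def by (simp add: norm_exp_eq_Re)

lemma addchar_eq_1_iff:
  assumes "p > 0"
  shows "addchar p m = 1 \<longleftrightarrow> int p dvd m"
proof -
  have "addchar p m = exp (complex_of_real (2 * pi * m / p) * \<i>)"
    unfolding addchar_def by (simp add: field_simps)
  also have "\<dots> = 1 \<longleftrightarrow> (\<exists>q::int. 2 * pi * m / p = 2 * pi * q)"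
    by (simp add: exp_eq_1 algebra_simps)
  also have "\<dots> \<longleftrightarrow> (\<exists>q::int. m = int p * q)"
    using assms by (simp add: field_simps) (metis of_int_eq_iff of_int_mult of_int_of_nat_eq)
  finally show ?thesis by (auto simp: dvd_def)
qed

lemma addchar_mod:
  assumes "p > 0"
  shows "addchar p (m mod int p) = addchar p m"
proof -
  have "addchar p m = addchar p (m mod int p) * addchar p (int p * (m div int p))"
    by (simp flip: addchar_add)
  then show ?thesis using assms by (simp add: addchar_eq_1_iff)
qed

definition dot :: "nat \<Rightarrow> (nat \<Rightarrow> 'a) \<Rightarrow> (nat \<Rightarrow> 'a) \<Rightarrow> 'a::comm_semiring_0" where
  "dot n x y = (\<Sum>j<n. x j * y j)"

lemma dot_commute: "dot n x y = dot n y x"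
  unfolding dot_def by (simp add: mult.commute)

lemma dot_restrict_left [simp]: "dot n (restrict x {0..<n}) y = dot n x y"
  unfolding dot_def by (rule sum.cong) auto

lemma dot_add_left: "dot n (\<lambda>j. x j + y j) z = dot n x z + dot n y z"
  unfolding dot_def by (simp add: sum.distrib distrib_right)

lemma dot_mod_left: "dot n (\<lambda>j. x j mod m) y mod m = dot n x y mod (m::int)"
proof -
  have "dot n (\<lambda>j. x j mod m) y mod m = (\<Sum>j<n. (x j mod m * y j) mod m) mod m"
    unfolding dot_def by (rule mod_sum_eq[symmetric])
  also have "\<dots> = (\<Sum>j<n. (x j * y j) mod m) mod m"
    by (simp add: mod_mult_left_eq)
  also have "\<dots> = dot n x y mod m"
    unfolding dot_def by (rule mod_sum_eq)
  finally show ?thesis .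
qed

definition Fp_vectors :: "nat \<Rightarrow> nat \<Rightarrow> (nat \<Rightarrow> int) set" where
  "Fp_vectors n p = {0..<n} \<rightarrow>\<^sub>E {0..<int p}"

lemma finite_Fp_vectors [simp]: "finite (Fp_vectors n p)"
  unfolding Fp_vectors_def by (simp add: finite_PiE)

definition shift_mod :: "nat \<Rightarrow> nat \<Rightarrow> (nat \<Rightarrow> int) \<Rightarrow> (nat \<Rightarrow> int) \<Rightarrow> nat \<Rightarrow> int" where
  "shift_mod n p v x = restrict (\<lambda>j. (x j + v j) mod int p) {0..<n}"

lemma shift_mod_in_Fp_vectors: "p > 0 \<Longrightarrow> shift_mod n p v x \<in> Fp_vectors n p"
  unfolding shift_mod_def Fp_vectors_def by auto

lemma shift_mod_shift_mod_uminus: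
  assumes "x \<in> Fp_vectors n p"
  shows "shift_mod n p (\<lambda>j. - v j) (shift_mod n p v x) = x"
proof (rule ext)
  fix j
  show "shift_mod n p (\<lambda>j. - v j) (shift_mod n p v x) j = x j"
  proof (cases "j < n")
    case True
    then have "x j \<in> {0..<int p}" using assms by (auto simp: Fp_vectors_def)
    with True show ?thesis by (simp add: shift_mod_def mod_diff_left_eq)
  next
    case False
    then have "x j = undefined" using assms unfolding Fp_vectors_def by (intro PiE_arb) auto
    with False show ?thesis by (simp add: shift_mod_def)
  qed
qed

lemma bij_betw_shift_mod:
  assumes "p > 0"
  shows "bij_betw (shift_mod n p v) (Fp_vectors n p) (Fp_vectors n p)"
proof (rule bij_betwI[where g = "shift_mod n p (\<lambda>j. - v j)"])
  show "\<And>x. x \<in> Fp_vectors n p \<Longrightarrow> shift_mod n p (\<lambda>j. - v j) (shift_mod n p v x) = x"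
    by (rule shift_mod_shift_mod_uminus)
  show "\<And>x. x \<in> Fp_vectors n p \<Longrightarrow> shift_mod n p v (shift_mod n p (\<lambda>j. - v j) x) = x"
    using shift_mod_shift_mod_uminus[of _ n p "\<lambda>j. - v j"] by simp
qed (use assms shift_mod_in_Fp_vectors in auto)

lemma dot_shift_mod_mod:
  "dot n (shift_mod n p v x) c mod int p = (dot n x c + dot n v c) mod int p"
  unfolding shift_mod_def dot_restrict_left dot_mod_left dot_add_left ..

definition hyperplane_mod :: "nat \<Rightarrow> nat \<Rightarrow> (nat \<Rightarrow> int) \<Rightarrow> (nat \<Rightarrow> int) set" where
  "hyperplane_mod n p c = {x \<in> Fp_vectors n p. int p dvd dot n x c}"

lemma hyperplane_char_sum_eq_0:
  assumes p: "p > 0" and v: "int p dvd dot n v c" and av: "\<not> int p dvd dot n a v"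
  shows "(\<Sum>x\<in>hyperplane_mod n p c. addchar p (dot n a x)) = 0"
proof -
  define g where "g x = (if int p dvd dot n x c then addchar p (dot n a x) else 0)" for x
  have g_shift: "g (shift_mod n p v x) = addchar p (dot n a v) * g x" for x
  proof -
    have "int p dvd dot n (shift_mod n p v x) c \<longleftrightarrow> int p dvd dot n x c + dot n v c"
      by (metis dvd_eq_mod_eq_0 dot_shift_mod_mod)
    also have "\<dots> \<longleftrightarrow> int p dvd dot n x c"
      using v by (simp add: dvd_add_left_iff)
    moreover have "addchar p (dot n a (shift_mod n p v x)) = addchar p (dot n a x + dot n a v)"
      using dot_shift_mod_mod[of n p v x a] p
      by (metis addchar_mod dot_commute)
    ultimately show ?thesis by (simp add: g_def addchar_add)
  qed
  have "(\<Sum>x\<in>hyperplane_mod n p c. addchar p (dot n a x)) = sum g (Fp_vectors n p)"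
    unfolding hyperplane_mod_def g_def by (simp add: sum.inter_filter)
  moreover have "sum g (Fp_vectors n p) = addchar p (dot n a v) * sum g (Fp_vectors n p)"
    using sum.reindex_bij_betw[OF bij_betw_shift_mod[OF p, of n v], of g]
    by (simp add: g_shift sum_distrib_left)
  moreover have "addchar p (dot n a v) \<noteq> 1"
    using p av by (simp add: addchar_eq_1_iff)
  ultimately show ?thesis by simp
qed

lemma card_hyperplane_mod_le:
  assumes p: "prime p" and l: "l < n" and cl: "\<not> int p dvd c l"
  shows "card (hyperplane_mod n p c) \<le> p ^ (n - 1)"
proof -
  let ?H = "hyperplane_mod n p c" and ?forget = "\<lambda>x. x(l := undefined)"
  have "inj_on ?forget ?H"
  proof (rule inj_onI)
    fix x y assume x: "x \<in> ?H" and y: "y \<in> ?H" and xy: "?forget x = ?forget y"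
    have off_l: "x j = y j" if "j \<noteq> l" for j
      using fun_cong[OF xy, of j] that by simp
    have "dot n x c - dot n y c = (\<Sum>j<n. (x j - y j) * c j)"
      unfolding dot_def by (simp add: sum_subtractf left_diff_distrib)
    also have "\<dots> = (x l - y l) * c l"
      using l off_l by (subst sum.remove[of _ l]) (auto intro: sum.neutral)
    finally have diff: "dot n x c - dot n y c = (x l - y l) * c l" .
    have "int p dvd (x l - y l) * c l"
      unfolding diff[symmetric] using x y by (simp add: hyperplane_mod_def)
    then have "x l mod int p = y l mod int p"
      using p cl by (simp add: prime_dvd_mult_iff mod_eq_dvd_iff)
    moreover have "x l \<in> {0..<int p}" "y l \<in> {0..<int p}"
      using x y l by (auto simp: hyperplane_mod_def Fp_vectors_def)
    ultimately have "x l = y l" by simp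
    then show "x = y" using off_l by (metis ext)
  qed
  then have "card ?H = card (?forget ` ?H)"
    by (simp add: card_image)
  also have "\<dots> \<le> card (({0..<n} - {l}) \<rightarrow>\<^sub>E {0..<int p})"
    by (intro card_mono finite_PiE) (auto simp: hyperplane_mod_def Fp_vectors_def PiE_def extensional_def Pi_def)
  also have "\<dots> = p ^ (n - 1)"
    using l by (simp add: card_PiE)
  finally show ?thesis .
qed

lemma norm_hyperplane_char_sum_le:
  assumes p: "prime p" and l: "l < n" and al: "\<not> int p dvd a l"
  shows "norm (\<Sum>x\<in>hyperplane_mod n p c. addchar p (dot n a x)) \<le> real p ^ (n - 1)"
proof (cases "\<forall>j<n. int p dvd c j")
  case True
  define e where "e j = (if j = l then 1 else 0 :: int)" for j
  have "dot n e c = c l" "dot n a e = a l"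
    using l by (simp_all add: dot_def e_def if_distrib[of "\<lambda>z. z * _"] if_distrib[of "\<lambda>z. _ * z"] cong: if_cong)
  then have "(\<Sum>x\<in>hyperplane_mod n p c. addchar p (dot n a x)) = 0"
    using p True l al by (intro hyperplane_char_sum_eq_0[of p n e]) (auto simp: prime_gt_0_nat)
  then show ?thesis by simp
next
  case False
  then obtain j where j: "j < n" "\<not> int p dvd c j" by blast
  have "norm (\<Sum>x\<in>hyperplane_mod n p c. addchar p (dot n a x))
        \<le> (\<Sum>x\<in>hyperplane_mod n p c. norm (addchar p (dot n a x)))"
    by (rule norm_sum)
  also have "\<dots> = real (card (hyperplane_mod n p c))" by simp
  also have "\<dots> \<le> real p ^ (n - 1)"
    using card_hyperplane_mod_le[OF p j(1), of c] j(2) by (metis of_nat_le_iff of_nat_power)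
  finally show ?thesis .
qed

abbreviation mat_of :: "nat \<Rightarrow> (nat \<Rightarrow> nat \<Rightarrow> 'a) \<Rightarrow> 'a mat" where
  "mat_of n X \<equiv> mat n n (\<lambda>(i, j). X i j)"

definition row_cofactors :: "nat \<Rightarrow> nat \<Rightarrow> (nat \<Rightarrow> nat \<Rightarrow> 'a::comm_ring_1) \<Rightarrow> nat \<Rightarrow> 'a" where
  "row_cofactors n k Y j = cofactor (mat_of n (Y(k := (\<lambda>_. 0)))) k j"

lemma det_fun_upd_row:
  assumes k: "k < n"
  shows "det (mat_of n (Y(k := x))) = dot n x (row_cofactors n k Y)"
proof -
  have "det (mat_of n (Y(k := x))) = (\<Sum>j<n. mat_of n (Y(k := x)) $$ (k, j) * cofactor (mat_of n (Y(k := x))) k j)"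
    by (rule laplace_expansion_row[OF _ k]) simp
  also have "\<dots> = dot n x (row_cofactors n k Y)"
    unfolding dot_def
  proof (rule sum.cong[OF refl])
    fix j assume j: "j \<in> {..<n}"
    have "mat_delete (mat_of n (Y(k := x))) k j = mat_delete (mat_of n (Y(k := (\<lambda>_. 0)))) k j"
      unfolding mat_delete_def by (rule eq_matI) auto
    then show "mat_of n (Y(k := x)) $$ (k, j) * cofactor (mat_of n (Y(k := x))) k j
        = x j * row_cofactors n k Y j"
      using j k by (simp add: row_cofactors_def cofactor_def)
  qed
  finally show ?thesis .
qed

lemma dot_row_cofactors_other_row:
  assumes k: "k < n" and i: "i < n" "i \<noteq> k"
  shows "dot n (Y i) (row_cofactors n k Y) = 0"
proof -
  have "dot n (Y i) (row_cofactors n k Y) = det (mat_of n (Y(k := Y i)))"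
    by (rule det_fun_upd_row[OF k, symmetric])
  also have "\<dots> = 0"
    by (rule det_identical_rows[of _ n k i]) (use i k in \<open>auto intro!: eq_vecI\<close>)
  finally show ?thesis .
qed

lemma sum_PiE_insert:
  assumes "k \<notin> S"
  shows "(\<Sum>X\<in>Pi\<^sub>E (insert k S) B. f X) = (\<Sum>Y\<in>Pi\<^sub>E S B. \<Sum>x\<in>B k. f (Y(k := x)))"
proof -
  have "(\<Sum>X\<in>Pi\<^sub>E (insert k S) B. f X) = (\<Sum>(x, Y)\<in>B k \<times> Pi\<^sub>E S B. f (Y(k := x)))"
    unfolding PiE_insert_eq
    by (subst sum.reindex[OF inj_combinator[OF assms]]) (simp add: case_prod_beta comp_def)
  also have "\<dots> = (\<Sum>x\<in>B k. \<Sum>Y\<in>Pi\<^sub>E S B. f (Y(k := x)))"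
    by (simp add: sum.cartesian_product)
  also have "\<dots> = (\<Sum>Y\<in>Pi\<^sub>E S B. \<Sum>x\<in>B k. f (Y(k := x)))"
    by (rule sum.swap)
  finally show ?thesis .
qed

lemma S_p_row_expansion:
  assumes p: "p > 0" and k: "k < n"
  defines "K \<equiv> {..<n} - {k}"
  shows "S_p n p a = (\<Sum>Y\<in>K \<rightarrow>\<^sub>E Fp_vectors n p.
           addchar p (\<Sum>i\<in>K. dot n (a i) (Y i)) *
           (\<Sum>x\<in>hyperplane_mod n p (row_cofactors n k Y). addchar p (dot n (a k) x)))"
proof -
  let ?V = "Fp_vectors n p"
  define f where
    "f X = (if det_zero_mod n p X then addchar p (\<Sum>i<n. dot n (a i) (X i)) else 0)" for X
  have Fp: "Fp_matrices n p = Pi\<^sub>E (insert k K) (\<lambda>_. ?V)"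
    unfolding Fp_matrices_def Fp_vectors_def K_def using k
    by (simp add: atLeast0LessThan insert_absorb)
  have "S_p n p a = (\<Sum>X\<in>Fp_matrices n p. f X)"
    unfolding S_p_def f_def lin_form_def addchar_def[symmetric] dot_def
    using p by (simp add: addchar_mod sum.inter_filter Fp finite_PiE K_def)
  also have "\<dots> = (\<Sum>Y\<in>K \<rightarrow>\<^sub>E ?V. \<Sum>x\<in>?V. f (Y(k := x)))"
    unfolding Fp by (rule sum_PiE_insert) (simp add: K_def)
  also have "\<dots> = (\<Sum>Y\<in>K \<rightarrow>\<^sub>E ?V. addchar p (\<Sum>i\<in>K. dot n (a i) (Y i)) *
           (\<Sum>x\<in>hyperplane_mod n p (row_cofactors n k Y). addchar p (dot n (a k) x)))"
  proof (rule sum.cong[OF refl])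
    fix Y :: "nat \<Rightarrow> nat \<Rightarrow> int"
    let ?c = "row_cofactors n k Y" and ?rest = "\<Sum>i\<in>K. dot n (a i) (Y i)"
    have lin: "(\<Sum>i<n. dot n (a i) ((Y(k := x)) i)) = ?rest + dot n (a k) x" for x
      unfolding K_def using k by (subst sum.remove[of _ k]) (auto intro!: sum.cong)
    have det: "det_zero_mod n p (Y(k := x)) \<longleftrightarrow> int p dvd dot n x ?c" for x
      unfolding det_zero_mod_def det_fun_upd_row[OF k] ..
    have "(\<Sum>x\<in>?V. f (Y(k := x)))
        = (\<Sum>x\<in>?V. if int p dvd dot n x ?c then addchar p ?rest * addchar p (dot n (a k) x) else 0)"
      unfolding f_def lin det addchar_add ..
    also have "\<dots> = addchar p ?rest * (\<Sum>x\<in>hyperplane_mod n p ?c. addchar p (dot n (a k) x))"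
      unfolding hyperplane_mod_def sum_distrib_left by (simp add: sum.inter_filter)
    finally show "(\<Sum>x\<in>?V. f (Y(k := x))) = addchar p ?rest * (\<Sum>x\<in>hyperplane_mod n p ?c. addchar p (dot n (a k) x))" .
  qed
  finally show ?thesis .
qed

lemma norm_S_p_le:
  assumes p: "prime p" and k: "k < n" and l: "l < n" and akl: "\<not> int p dvd a k l"
  shows "norm (S_p n p a) \<le> real p ^ (n * (n - 1))"
proof -
  define K where "K = {..<n} - {k}"
  define T where
    "T Y = (\<Sum>x\<in>hyperplane_mod n p (row_cofactors n k Y). addchar p (dot n (a k) x))" for Y
  let ?V = "Fp_vectors n p" and ?H = "hyperplane_mod n p (a k)"
  have p0: "p > 0" using p by (simp add: prime_gt_0_nat)
  have T_eq_0: "T Y = 0" if Y: "Y \<in> (K \<rightarrow>\<^sub>E ?V) - (K \<rightarrow>\<^sub>E ?H)" for Y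
  proof -
    obtain i where i: "i \<in> K" "Y i \<in> ?V" "Y i \<notin> ?H"
      using Y unfolding PiE_iff by blast
    then have "\<not> int p dvd dot n (a k) (Y i)"
      by (simp add: hyperplane_mod_def dot_commute)
    moreover have "dot n (Y i) (row_cofactors n k Y) = 0"
      using i k by (intro dot_row_cofactors_other_row) (auto simp: K_def)
    ultimately show ?thesis
      unfolding T_def using p0 by (intro hyperplane_char_sum_eq_0) auto
  qed
  have "norm (S_p n p a) \<le> (\<Sum>Y\<in>K \<rightarrow>\<^sub>E ?V. norm (T Y))"
    unfolding S_p_row_expansion[OF p0 k, folded K_def]
    by (rule order_trans[OF norm_sum]) (simp add: norm_mult T_def)
  also have "\<dots> = (\<Sum>Y\<in>K \<rightarrow>\<^sub>E ?H. norm (T Y))"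
    by (rule sum.mono_neutral_right)
      (auto simp: finite_PiE K_def T_eq_0 hyperplane_mod_def intro: PiE_mono)
  also have "\<dots> \<le> (\<Sum>Y\<in>K \<rightarrow>\<^sub>E ?H. real p ^ (n - 1))"
    unfolding T_def by (rule sum_mono) (rule norm_hyperplane_char_sum_le[OF p l, of "a k", OF akl])
  also have "\<dots> = real (card ?H) ^ (n - 1) * real p ^ (n - 1)"
    using k by (simp add: card_PiE K_def)
  also have "\<dots> \<le> real (p ^ (n - 1)) ^ (n - 1) * real p ^ (n - 1)"
    using card_hyperplane_mod_le[OF p l, of "a k"] akl
    by (intro mult_right_mono power_mono) auto
  also have "\<dots> = real p ^ (n * (n - 1))"
    by (cases n) (simp_all add: power_mult[symmetric] power_add[symmetric] add.commute)
  finally show ?thesis .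
qed

theorem lemma3p5:
  fixes n :: nat
  assumes "n \<ge> 1"
  shows "\<exists>C::real. \<forall>(p::nat) (a::nat \<Rightarrow> nat \<Rightarrow> int).
           prime p \<longrightarrow>
           (\<forall>i<n. \<forall>j<n. a i j \<in> {0..<int p}) \<longrightarrow>
           (\<exists>i<n. \<exists>j<n. a i j \<noteq> 0) \<longrightarrow>
           norm (S_p n p a) \<le> C * real p powr (real (n^2) - (real n + 1) / 2)"
proof (intro exI[of _ 1] allI impI)
  fix p :: nat and a :: "nat \<Rightarrow> nat \<Rightarrow> int"
  assume p: "prime p" and a_range: "\<forall>i<n. \<forall>j<n. a i j \<in> {0..<int p}"
    and "\<exists>i<n. \<exists>j<n. a i j \<noteq> 0"
  then obtain k l where k: "k < n" and l: "l < n" and "a k l \<noteq> 0" by blast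
  moreover have "0 \<le> a k l" "a k l < int p" using a_range k l by auto
  ultimately have akl: "\<not> int p dvd a k l" by (auto dest: zdvd_imp_le)
  have "norm (S_p n p a) \<le> real p ^ (n * (n - 1))"
    by (rule norm_S_p_le[OF p k l, of a, OF akl])
  also have "\<dots> = real p powr real (n * (n - 1))"
    using p prime_gt_0_nat by (intro powr_realpow[symmetric]) simp
  also have "\<dots> \<le> real p powr (real (n^2) - (real n + 1) / 2)"
    using assms prime_ge_1_nat[OF p]
    by (intro powr_mono) (auto simp: of_nat_diff power2_eq_square algebra_simps)
  finally show "norm (S_p n p a) \<le> 1 * real p powr (real (n^2) - (real n + 1) / 2)" by simp
qed

end
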